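(* For every integer $N\ge1$ there exists $\delta_0>0$ depending only on $N$ such that the following holds. Let $U_\varphi,V_\varphi\subset\mathbb R^2$ be open with $\overline B_\infty(0,1)\subset U_\varphi\cap V_\varphi$, where $\overline B_\infty(0,1)=\{(x_1,x_2):\max(|x_1|,|x_2|)\le 1\}$, and let $\varphi:U_\varphi\to V_\varphi$ be a $C^{N+1}$ diffeomorphism onto its image with $\varphi(0)=0$, $d\varphi(0)=\mathrm{diag}(2,1/2)$, and $\sup_{U_\varphi}|\partial^\alpha\varphi|\le\delta$ for all $2\le|\alpha|\le N+1$, where $0<\delta\le\delta_0$. Let $F:[-1,1]\to\mathbb R$ be a $C^1$ function with $F(0)=0$ and $\sup|F'|\le 1$. Then there exists a function $\Phi_uF:[-1,1]\to\mathbb R$ with $\Phi_uF(0)=0$ such that $$\varphi(\mathcal G_u(F))\cap\{|x_1|\le 1\}=\mathcal G_u(\Phi_uF),$$ where for a function $H:[-1,1]\to\mathbb R$ we write $\mathcal G_u(H):=\{(x_1,x_2)\in\mathbb R^2:|x_1|\le1,\ x_2=H(x_1)\}$. *)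

theory Defs
  imports "HOL-Analysis.Analysis"
begin

definition pd1 :: "(real \<times> real \<Rightarrow> real) \<Rightarrow> real \<times> real \<Rightarrow> real" where
  "pd1 f p = deriv (\<lambda>t. f (t, snd p)) (fst p)"

definition pd2 :: "(real \<times> real \<Rightarrow> real) \<Rightarrow> real \<times> real \<Rightarrow> real" where
  "pd2 f p = deriv (\<lambda>t. f (fst p, t)) (snd p)"

definition pderiv_mi :: "nat \<times> nat \<Rightarrow> (real \<times> real \<Rightarrow> real) \<Rightarrow> real \<times> real \<Rightarrow> real" where
  "pderiv_mi \<alpha> f = (pd1 ^^ fst \<alpha>) ((pd2 ^^ snd \<alpha>) f)"

definition vpderiv_mi :: "nat \<times> nat \<Rightarrow> (real \<times> real \<Rightarrow> real \<times> real) \<Rightarrow> real \<times> real \<Rightarrow> real \<times> real" where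
  "vpderiv_mi \<alpha> f p = (pderiv_mi \<alpha> (\<lambda>q. fst (f q)) p, pderiv_mi \<alpha> (\<lambda>q. snd (f q)) p)"

fun Ck :: "nat \<Rightarrow> (real \<times> real) set \<Rightarrow> (real \<times> real \<Rightarrow> real) \<Rightarrow> bool" where
  "Ck 0 U f = continuous_on U f"
| "Ck (Suc k) U f = (f differentiable_on U \<and> Ck k U (pd1 f) \<and> Ck k U (pd2 f))"

definition Ck_map :: "nat \<Rightarrow> (real \<times> real) set \<Rightarrow> (real \<times> real \<Rightarrow> real \<times> real) \<Rightarrow> bool" where
  "Ck_map k U f = (Ck k U (\<lambda>q. fst (f q)) \<and> Ck k U (\<lambda>q. snd (f q)))"

definition Ck_diffeo_onto_image :: "nat \<Rightarrow> (real \<times> real) set \<Rightarrow> (real \<times> real \<Rightarrow> real \<times> real) \<Rightarrow> bool" where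
  "Ck_diffeo_onto_image k U f =
     (inj_on f U \<and> open (f ` U) \<and> Ck_map k U f \<and> Ck_map k (f ` U) (the_inv_into U f))"

definition closed_unit_box :: "(real \<times> real) set" where
  "closed_unit_box = {x. max \<bar>fst x\<bar> \<bar>snd x\<bar> \<le> 1}"

definition graph_u :: "(real \<Rightarrow> real) \<Rightarrow> (real \<times> real) set" where
  "graph_u H = {x. \<bar>fst x\<bar> \<le> 1 \<and> snd x = H (fst x)}"

definition C1_on_interval :: "(real \<Rightarrow> real) \<Rightarrow> (real \<Rightarrow> real) \<Rightarrow> bool" where
  "C1_on_interval F F' =
     ((\<forall>x\<in>{-1..1}. (F has_real_derivative F' x) (at x within {-1..1})) \<and> continuous_on {-1..1} F')"

end

theory Submission
  imports Defs
begin

text \<open>Write \<open>\<phi> = (\<phi>\<^sub>1, \<phi>\<^sub>2)\<close>. Since \<open>F\<close> is 1-Lipschitz with \<open>F 0 = 0\<close>, its graph stays in the unit box,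
  where the second derivatives of \<open>\<phi>\<^sub>1\<close> are at most \<open>\<delta>\<close> and its gradient at the origin is \<open>(2, 0)\<close>.
  Splitting an increment of \<open>g s = \<phi>\<^sub>1 (s, F s)\<close> into a step along the \<open>x\<^sub>1\<close>-axis, a mixed second
  difference and a vertical step gives \<open>\<bar>g s - g s' - 2 (s - s')\<bar> \<le> 4 \<delta> \<bar>s - s'\<bar>\<close>.
  For \<open>\<delta> \<le> 1/4\<close> the continuous map \<open>g\<close> is therefore injective on \<open>[-1, 1]\<close> with
  \<open>g (-1) \<le> -1\<close> and \<open>1 \<le> g 1\<close>, so each \<open>x\<^sub>1\<close> with \<open>\<bar>x\<^sub>1\<bar> \<le> 1\<close> is hit exactly once and the image is the graph
  of \<open>x\<^sub>1 \<mapsto> \<phi>\<^sub>2 (g\<^sup>-\<^sup>1 x\<^sub>1, F (g\<^sup>-\<^sup>1 x\<^sub>1))\<close>.\<close>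

lemma mem_closed_unit_box [simp]: "(x, y) \<in> closed_unit_box \<longleftrightarrow> x \<in> {-1..1} \<and> y \<in> {-1..1}"
  by (auto simp: closed_unit_box_def)

lemma Ck_Suc_imp_Ck: "Ck (Suc k) U f \<Longrightarrow> Ck k U f"
proof (induction k arbitrary: f)
  case 0
  then show ?case by (simp add: differentiable_imp_continuous_on)
next
  case (Suc k)
  show ?case using Suc.prems by (auto intro: Suc.IH)
qed

lemma Ck_mono: "j \<le> k \<Longrightarrow> Ck k U f \<Longrightarrow> Ck j U f"
  by (induction k rule: dec_induct) (use Ck_Suc_imp_Ck in blast)+

lemma has_derivative_imp_partial1:
  assumes "(f has_derivative D) (at (a, b))"
  shows "((\<lambda>t. f (t, b)) has_real_derivative D (1, 0)) (at a)"
proof -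
  have "((\<lambda>t. (t, b)) has_derivative (\<lambda>t. (t, 0))) (at a)"
    by (auto intro!: derivative_eq_intros)
  then have "((\<lambda>t. f (t, b)) has_derivative (\<lambda>t. D (t, 0))) (at a)"
    using has_derivative_compose[of "\<lambda>t. (t, b)" _ a UNIV f D] assms by simp
  moreover have "(\<lambda>t. D (t, 0)) = (*) (D (1, 0))"
  proof
    fix t :: real
    show "D (t, 0) = D (1, 0) * t"
      using linear_cmul[OF has_derivative_linear[OF assms], of t "(1, 0)"] by (simp add: mult.commute)
  qed
  ultimately show ?thesis by (simp add: has_field_derivative_def)
qed

lemma has_derivative_imp_partial2:
  assumes "(f has_derivative D) (at (a, b))"
  shows "((\<lambda>t. f (a, t)) has_real_derivative D (0, 1)) (at b)"
proof -
  have "((\<lambda>t. (a, t)) has_derivative (\<lambda>t. (0, t))) (at b)"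
    by (auto intro!: derivative_eq_intros)
  then have "((\<lambda>t. f (a, t)) has_derivative (\<lambda>t. D (0, t))) (at b)"
    using has_derivative_compose[of "\<lambda>t. (a, t)" _ b UNIV f D] assms by simp
  moreover have "(\<lambda>t. D (0, t)) = (*) (D (0, 1))"
  proof
    fix t :: real
    show "D (0, t) = D (0, 1) * t"
      using linear_cmul[OF has_derivative_linear[OF assms], of t "(0, 1)"] by (simp add: mult.commute)
  qed
  ultimately show ?thesis by (simp add: has_field_derivative_def)
qed

lemma pd1_eq_derivative: "(f has_derivative D) (at (a, b)) \<Longrightarrow> pd1 f (a, b) = D (1, 0)"
  unfolding pd1_def by (simp add: DERIV_imp_deriv has_derivative_imp_partial1)

lemma pd2_eq_derivative: "(f has_derivative D) (at (a, b)) \<Longrightarrow> pd2 f (a, b) = D (0, 1)"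
  unfolding pd2_def by (simp add: DERIV_imp_deriv has_derivative_imp_partial2)

lemma has_real_derivative_pd1:
  "f differentiable (at (a, b)) \<Longrightarrow> ((\<lambda>t. f (t, b)) has_real_derivative pd1 f (a, b)) (at a)"
  unfolding differentiable_def using has_derivative_imp_partial1 pd1_eq_derivative by metis

lemma has_real_derivative_pd2:
  "f differentiable (at (a, b)) \<Longrightarrow> ((\<lambda>t. f (a, t)) has_real_derivative pd2 f (a, b)) (at b)"
  unfolding differentiable_def using has_derivative_imp_partial2 pd2_eq_derivative by metis

lemma pd1_bound_imp_lipschitz:
  assumes "convex S" "x \<in> S" "x' \<in> S"
    and "\<And>t. t \<in> S \<Longrightarrow> u differentiable (at (t, y))"
    and "\<And>t. t \<in> S \<Longrightarrow> \<bar>pd1 u (t, y)\<bar> \<le> B"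
  shows "\<bar>u (x, y) - u (x', y)\<bar> \<le> B * \<bar>x - x'\<bar>"
  using field_differentiable_bound[of S "\<lambda>t. u (t, y)" "\<lambda>t. pd1 u (t, y)" B x x'] assms
  by (simp add: has_field_derivative_at_within has_real_derivative_pd1)

lemma pd2_bound_imp_lipschitz:
  assumes "convex S" "y \<in> S" "y' \<in> S"
    and "\<And>t. t \<in> S \<Longrightarrow> u differentiable (at (x, t))"
    and "\<And>t. t \<in> S \<Longrightarrow> \<bar>pd2 u (x, t)\<bar> \<le> B"
  shows "\<bar>u (x, y) - u (x, y')\<bar> \<le> B * \<bar>y - y'\<bar>"
  using field_differentiable_bound[of S "\<lambda>t. u (x, t)" "\<lambda>t. pd2 u (x, t)" B y y'] assms
  by (simp add: has_field_derivative_at_within has_real_derivative_pd2)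

lemma C1_on_interval_lipschitz_on:
  assumes "C1_on_interval F F'" "\<And>x. x \<in> {-1..1} \<Longrightarrow> \<bar>F' x\<bar> \<le> B"
  shows "B-lipschitz_on {-1..1} F"
proof (rule lipschitz_onI)
  show "dist (F x) (F y) \<le> B * dist x y" if "x \<in> {-1..1}" "y \<in> {-1..1}" for x y
    using field_differentiable_bound[of "{-1..1}" F F' B x y] that assms
    by (simp add: C1_on_interval_def dist_real_def)
  show "0 \<le> B"
    using assms(2)[of 0] by simp
qed

lemma lipschitz_on_unit_interval_into_self:
  fixes F :: "real \<Rightarrow> real"
  assumes "1-lipschitz_on {-1..1} F" "F 0 = 0" "x \<in> {-1..1}"
  shows "F x \<in> {-1..1}"
proof -
  have zero: "0 \<in> {-1..1::real}" by simp
  show ?thesis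
    using lipschitz_onD[OF assms(1,3) zero] assms(2,3) by (auto simp: dist_real_def abs_le_iff)
qed

text \<open>Mixed second derivatives enter only as \<open>pd1 (pd2 f)\<close>.\<close>

locale almost_doubling =
  fixes f :: "real \<times> real \<Rightarrow> real" and \<delta> :: real
  assumes differentiable: "p \<in> closed_unit_box \<Longrightarrow> f differentiable (at p)"
    and pd1_differentiable: "p \<in> closed_unit_box \<Longrightarrow> pd1 f differentiable (at p)"
    and pd2_differentiable: "p \<in> closed_unit_box \<Longrightarrow> pd2 f differentiable (at p)"
    and pd1_pd1_bound: "p \<in> closed_unit_box \<Longrightarrow> \<bar>pd1 (pd1 f) p\<bar> \<le> \<delta>"
    and pd1_pd2_bound: "p \<in> closed_unit_box \<Longrightarrow> \<bar>pd1 (pd2 f) p\<bar> \<le> \<delta>"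
    and pd2_pd2_bound: "p \<in> closed_unit_box \<Longrightarrow> \<bar>pd2 (pd2 f) p\<bar> \<le> \<delta>"
    and pd1_origin: "pd1 f (0, 0) = 2"
    and pd2_origin: "pd2 f (0, 0) = 0"
begin

lemma delta_nonneg: "0 \<le> \<delta>"
  using pd1_pd1_bound[of "(0, 0)"] by simp

lemma abs_pd2_le:
  assumes "x \<in> {-1..1}" "y \<in> {-1..1}"
  shows "\<bar>pd2 f (x, y)\<bar> \<le> 2 * \<delta>"
proof -
  have "\<bar>pd2 f (x, y) - pd2 f (x, 0)\<bar> \<le> \<delta> * \<bar>y - 0\<bar>"
    by (rule pd2_bound_imp_lipschitz[of "{-1..1}"])
       (use assms pd2_differentiable pd2_pd2_bound in auto)
  moreover have "\<bar>pd2 f (x, 0) - pd2 f (0, 0)\<bar> \<le> \<delta> * \<bar>x - 0\<bar>"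
    by (rule pd1_bound_imp_lipschitz[of "{-1..1}"])
       (use assms pd2_differentiable pd1_pd2_bound in auto)
  moreover have "\<delta> * \<bar>x\<bar> \<le> \<delta>" "\<delta> * \<bar>y\<bar> \<le> \<delta>"
    using assms delta_nonneg by (auto intro: mult_left_le)
  ultimately show ?thesis using pd2_origin by simp
qed

lemma axis_increment:
  assumes "x \<in> {-1..1}" "x' \<in> {-1..1}"
  shows "\<bar>f (x, 0) - f (x', 0) - 2 * (x - x')\<bar> \<le> \<delta> * \<bar>x - x'\<bar>"
proof -
  have deriv: "((\<lambda>t. f (t, 0) - 2 * t) has_real_derivative pd1 f (t, 0) - 2) (at t within {-1..1})"
    if "t \<in> {-1..1}" for t
  proof -
    have "((\<lambda>t. f (t, 0) - 2 * t) has_real_derivative pd1 f (t, 0) - 2 * 1) (at t)"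
      by (intro DERIV_diff DERIV_cmult DERIV_ident has_real_derivative_pd1)
         (use that differentiable in simp)
    then show ?thesis by (simp add: has_field_derivative_at_within)
  qed
  have bound: "norm (pd1 f (t, 0) - 2) \<le> \<delta>" if t: "t \<in> {-1..1}" for t
  proof -
    have "\<bar>pd1 f (t, 0) - pd1 f (0, 0)\<bar> \<le> \<delta> * \<bar>t - 0\<bar>"
      by (rule pd1_bound_imp_lipschitz[of "{-1..1}"])
         (use t pd1_differentiable pd1_pd1_bound in auto)
    moreover have "\<delta> * \<bar>t\<bar> \<le> \<delta>" using t delta_nonneg by (auto intro: mult_left_le)
    ultimately show ?thesis using pd1_origin by simp
  qed
  have "norm ((f (x, 0) - 2 * x) - (f (x', 0) - 2 * x')) \<le> \<delta> * norm (x - x')"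
    by (rule field_differentiable_bound[OF convex_real_interval(5) deriv bound assms])
  then show ?thesis by (simp add: algebra_simps)
qed

lemma mixed_increment:
  assumes "x \<in> {-1..1}" "x' \<in> {-1..1}" "y \<in> {-1..1}"
  shows "\<bar>f (x, y) - f (x', y) - (f (x, 0) - f (x', 0))\<bar> \<le> \<delta> * \<bar>x - x'\<bar> * \<bar>y\<bar>"
proof -
  have deriv: "((\<lambda>t. f (x, t) - f (x', t)) has_real_derivative pd2 f (x, t) - pd2 f (x', t))
      (at t within {-1..1})" if "t \<in> {-1..1}" for t
  proof -
    have "((\<lambda>t. f (x, t) - f (x', t)) has_real_derivative pd2 f (x, t) - pd2 f (x', t)) (at t)"
      by (intro DERIV_diff has_real_derivative_pd2) (use that assms differentiable in simp_all)
    then show ?thesis by (simp add: has_field_derivative_at_within)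
  qed
  have bound: "norm (pd2 f (x, t) - pd2 f (x', t)) \<le> \<delta> * \<bar>x - x'\<bar>" if "t \<in> {-1..1}" for t
    using pd1_bound_imp_lipschitz[of "{-1..1}" x x' "pd2 f" t \<delta>] that assms
      pd2_differentiable pd1_pd2_bound
    by simp
  have "norm ((f (x, y) - f (x', y)) - (f (x, 0) - f (x', 0))) \<le> \<delta> * \<bar>x - x'\<bar> * norm (y - 0)"
    by (rule field_differentiable_bound[OF convex_real_interval(5) deriv bound]) (use assms in auto)
  then show ?thesis by simp
qed

lemma graph_increment:
  assumes F: "1-lipschitz_on {-1..1} F" "F 0 = 0" and s: "s \<in> {-1..1}" "s' \<in> {-1..1}"
  shows "\<bar>f (s, F s) - f (s', F s') - 2 * (s - s')\<bar> \<le> 4 * \<delta> * \<bar>s - s'\<bar>"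
proof -
  have Fs: "F s \<in> {-1..1}" "F s' \<in> {-1..1}"
    using lipschitz_on_unit_interval_into_self[OF F] s by auto
  have "\<bar>f (s, F s) - f (s', F s) - (f (s, 0) - f (s', 0))\<bar> \<le> \<delta> * \<bar>s - s'\<bar> * \<bar>F s\<bar>"
    using mixed_increment s Fs by blast
  also have "\<dots> \<le> \<delta> * \<bar>s - s'\<bar>"
    using Fs delta_nonneg by (auto intro: mult_left_le)
  finally have mixed: "\<bar>f (s, F s) - f (s', F s) - (f (s, 0) - f (s', 0))\<bar> \<le> \<delta> * \<bar>s - s'\<bar>" .
  have "\<bar>f (s', F s) - f (s', F s')\<bar> \<le> 2 * \<delta> * \<bar>F s - F s'\<bar>"
    by (rule pd2_bound_imp_lipschitz[of "{-1..1}"])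
       (use s Fs differentiable abs_pd2_le in auto)
  also have "\<dots> \<le> 2 * \<delta> * \<bar>s - s'\<bar>"
    using lipschitz_onD[OF F(1) s] delta_nonneg by (intro mult_left_mono) (auto simp: dist_real_def)
  finally have vertical: "\<bar>f (s', F s) - f (s', F s')\<bar> \<le> 2 * \<delta> * \<bar>s - s'\<bar>" .
  show ?thesis
    using mixed vertical axis_increment[OF s] by (simp add: abs_le_iff)
qed

lemma continuous_on_graph_coordinate:
  assumes "1-lipschitz_on {-1..1} F" "F 0 = 0"
  shows "continuous_on {-1..1} (\<lambda>s. f (s, F s))"
proof (rule continuous_on_compose2[of closed_unit_box f])
  show "continuous_on closed_unit_box f"
    using differentiable
    by (intro differentiable_imp_continuous_on differentiable_at_imp_differentiable_on) auto
  show "continuous_on {-1..1} (\<lambda>s. (s, F s))"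
    using lipschitz_on_continuous_on[OF assms(1)] by (intro continuous_intros)
  show "(\<lambda>s. (s, F s)) ` {-1..1} \<subseteq> closed_unit_box"
    using lipschitz_on_unit_interval_into_self[OF assms] by auto
qed

end

lemma almost_doubling_if_C2:
  assumes "open U" "closed_unit_box \<subseteq> U" "Ck 2 U f"
    and "\<And>\<alpha> p. fst \<alpha> + snd \<alpha> = 2 \<Longrightarrow> p \<in> closed_unit_box \<Longrightarrow> \<bar>pderiv_mi \<alpha> f p\<bar> \<le> \<delta>"
    and "(f has_derivative (\<lambda>p. 2 * fst p)) (at (0, 0))"
  shows "almost_doubling f \<delta>"
proof
  have "f differentiable_on U" "pd1 f differentiable_on U" "pd2 f differentiable_on U"
    using assms(3) by (simp_all add: numeral_2_eq_2)
  then show "f differentiable (at p)" "pd1 f differentiable (at p)" "pd2 f differentiable (at p)"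
    if "p \<in> closed_unit_box" for p
    using that assms(1,2) differentiable_on_eq_differentiable_at by blast+
  show "\<bar>pd1 (pd1 f) p\<bar> \<le> \<delta>" "\<bar>pd1 (pd2 f) p\<bar> \<le> \<delta>" "\<bar>pd2 (pd2 f) p\<bar> \<le> \<delta>"
    if "p \<in> closed_unit_box" for p
    using that assms(4)[of "(2, 0)"] assms(4)[of "(1, 1)"] assms(4)[of "(0, 2)"]
    by (simp_all add: pderiv_mi_def numeral_2_eq_2)
  show "pd1 f (0, 0) = 2" "pd2 f (0, 0) = 0"
    using pd1_eq_derivative[OF assms(5)] pd2_eq_derivative[OF assms(5)] by simp_all
qed

lemma image_graph_u_eq_graph_u:
  fixes \<phi> :: "real \<times> real \<Rightarrow> real \<times> real" and F :: "real \<Rightarrow> real"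
  defines "g \<equiv> \<lambda>s. fst (\<phi> (s, F s))"
  assumes "continuous_on {-1..1} g" "inj_on g {-1..1}" "g (-1) \<le> -1" "1 \<le> g 1"
  shows "\<phi> ` graph_u F \<inter> {x. \<bar>fst x\<bar> \<le> 1} =
    graph_u (\<lambda>t. snd (\<phi> (inv_into {-1..1} g t, F (inv_into {-1..1} g t))))"
    (is "_ = graph_u ?G")
proof (intro equalityI subsetI)
  fix x assume "x \<in> \<phi> ` graph_u F \<inter> {x. \<bar>fst x\<bar> \<le> 1}"
  then obtain s where s: "s \<in> {-1..1}" "x = \<phi> (s, F s)" "\<bar>fst x\<bar> \<le> 1"
    by (auto simp: graph_u_def abs_le_iff)
  then have "fst x = g s" by (simp add: g_def)
  with s assms(3) show "x \<in> graph_u ?G" by (simp add: graph_u_def)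
next
  fix x assume "x \<in> graph_u ?G"
  then obtain t where t: "t \<in> {-1..1}" "x = (t, ?G t)"
    by (cases x) (auto simp: graph_u_def abs_le_iff)
  obtain s where s: "s \<in> {-1..1}" "g s = t"
    using IVT'[of g "-1" t 1] assms(2,4,5) t(1) by auto
  then have "inv_into {-1..1} g t = s"
    using inv_into_f_eq[OF assms(3)] by blast
  then have "x = \<phi> (s, F s)"
    using s t by (simp add: g_def prod_eq_iff)
  then show "x \<in> \<phi> ` graph_u F \<inter> {x. \<bar>fst x\<bar> \<le> 1}"
    using s t by (auto simp: graph_u_def g_def abs_le_iff)
qed

lemma abs_pderiv_mi_fst_le: "\<bar>pderiv_mi \<alpha> (\<lambda>q. fst (\<phi> q)) p\<bar> \<le> norm (vpderiv_mi \<alpha> \<phi> p)"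
  using norm_fst_le[of "pderiv_mi \<alpha> (\<lambda>q. fst (\<phi> q)) p"] by (simp add: vpderiv_mi_def)

lemma graph_transform_exists:
  fixes \<phi> :: "real \<times> real \<Rightarrow> real \<times> real"
  assumes "open U" "closed_unit_box \<subseteq> U" "Ck 2 U (\<lambda>q. fst (\<phi> q))"
    and "\<And>\<alpha> p. fst \<alpha> + snd \<alpha> = 2 \<Longrightarrow> p \<in> closed_unit_box \<Longrightarrow> norm (vpderiv_mi \<alpha> \<phi> p) \<le> \<delta>"
    and "\<phi> (0, 0) = (0, 0)" "((\<lambda>q. fst (\<phi> q)) has_derivative (\<lambda>p. 2 * fst p)) (at (0, 0))"
    and "\<delta> \<le> 1/4" "1-lipschitz_on {-1..1} F" "F 0 = 0"
  shows "\<exists>G. G 0 = 0 \<and> \<phi> ` graph_u F \<inter> {x. \<bar>fst x\<bar> \<le> 1} = graph_u G"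
proof -
  define g where "g s = fst (\<phi> (s, F s))" for s
  interpret almost_doubling "\<lambda>q. fst (\<phi> q)" \<delta>
    using almost_doubling_if_C2[OF assms(1-3) _ assms(6)] assms(4) abs_pderiv_mi_fst_le order_trans
    by blast
  have near_doubling: "\<bar>g s - g s' - 2 * (s - s')\<bar> \<le> \<bar>s - s'\<bar>"
    if "s \<in> {-1..1}" "s' \<in> {-1..1}" for s s'
  proof -
    have "\<bar>g s - g s' - 2 * (s - s')\<bar> \<le> 4 * \<delta> * \<bar>s - s'\<bar>"
      using graph_increment[OF assms(8,9) that] by (simp add: g_def)
    also have "\<dots> \<le> \<bar>s - s'\<bar>"
      using mult_right_mono[of "4 * \<delta>" 1 "\<bar>s - s'\<bar>"] assms(7) by simp
    finally show ?thesis .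
  qed
  have g0: "g 0 = 0"
    using assms(5,9) by (simp add: g_def)
  have "inj_on g {-1..1}"
  proof (rule inj_onI)
    fix s s' assume "s \<in> {-1..1}" "s' \<in> {-1..1}" "g s = g s'"
    then have "\<bar>2 * (s - s')\<bar> \<le> \<bar>s - s'\<bar>"
      using near_doubling by fastforce
    then show "s = s'" by (simp add: abs_mult)
  qed
  moreover have "g (-1) \<le> -1" "1 \<le> g 1"
    using near_doubling[of "-1" 0] near_doubling[of 1 0] g0 by (auto simp: abs_le_iff)
  moreover have "continuous_on {-1..1} g"
    using continuous_on_graph_coordinate[OF assms(8,9)] by (simp add: g_def)
  ultimately obtain G where G: "\<phi> ` graph_u F \<inter> {x. \<bar>fst x\<bar> \<le> 1} = graph_u G"
    using image_graph_u_eq_graph_u[of \<phi> F] unfolding g_def by blast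
  moreover have "(0, 0) \<in> \<phi> ` graph_u F \<inter> {x. \<bar>fst x\<bar> \<le> 1}"
  proof -
    have "(0, 0) = \<phi> (0, F 0)" "(0, F 0) \<in> graph_u F"
      using assms(5,9) by (simp_all add: graph_u_def)
    then have "(0, 0) \<in> \<phi> ` graph_u F" by (rule image_eqI)
    then show ?thesis by simp
  qed
  ultimately have "G 0 = 0"
    by (auto simp: graph_u_def)
  with G show ?thesis by blast
qed

theorem lemma2p2:
  fixes N :: nat
  assumes "N \<ge> 1"
  shows "\<exists>\<delta>0::real. \<delta>0 > 0 \<and>
    (\<forall>(U::(real \<times> real) set) (V::(real \<times> real) set) (\<phi>::real \<times> real \<Rightarrow> real \<times> real)
       (\<delta>::real) (F::real \<Rightarrow> real) (F'::real \<Rightarrow> real).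
      open U \<and> open V \<and> closed_unit_box \<subseteq> U \<inter> V \<and>
      \<phi> ` U \<subseteq> V \<and> Ck_diffeo_onto_image (N + 1) U \<phi> \<and>
      \<phi> (0, 0) = (0, 0) \<and>
      (\<phi> has_derivative (\<lambda>(x1, x2). (2 * x1, x2 / 2))) (at (0, 0)) \<and>
      0 < \<delta> \<and> \<delta> \<le> \<delta>0 \<and>
      (\<forall>\<alpha>. 2 \<le> fst \<alpha> + snd \<alpha> \<and> fst \<alpha> + snd \<alpha> \<le> N + 1 \<longrightarrow>
          (\<forall>p\<in>U. norm (vpderiv_mi \<alpha> \<phi> p) \<le> \<delta>)) \<and>
      C1_on_interval F F' \<and> F 0 = 0 \<and> (\<forall>x\<in>{-1..1}. \<bar>F' x\<bar> \<le> 1)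
      \<longrightarrow> (\<exists>G::real \<Rightarrow> real. G 0 = 0 \<and>
             \<phi> ` graph_u F \<inter> {x. \<bar>fst x\<bar> \<le> 1} = graph_u G))"
proof -
  have "\<exists>G. G 0 = 0 \<and> \<phi> ` graph_u F \<inter> {x. \<bar>fst x\<bar> \<le> 1} = graph_u G"
    if "open U" "closed_unit_box \<subseteq> U \<inter> V" "Ck_diffeo_onto_image (N + 1) U \<phi>"
      "\<phi> (0, 0) = (0, 0)" "(\<phi> has_derivative (\<lambda>(x1, x2). (2 * x1, x2 / 2))) (at (0, 0))"
      "\<delta> \<le> 1/4"
      "\<forall>\<alpha>. 2 \<le> fst \<alpha> + snd \<alpha> \<and> fst \<alpha> + snd \<alpha> \<le> N + 1 \<longrightarrow>
          (\<forall>p\<in>U. norm (vpderiv_mi \<alpha> \<phi> p) \<le> \<delta>)"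
      "C1_on_interval F F'" "F 0 = 0" "\<forall>x\<in>{-1..1}. \<bar>F' x\<bar> \<le> 1"
    for U V :: "(real \<times> real) set" and \<phi> :: "real \<times> real \<Rightarrow> real \<times> real"
      and \<delta> :: real and F F' :: "real \<Rightarrow> real"
  proof (rule graph_transform_exists[of U])
    show "Ck 2 U (\<lambda>q. fst (\<phi> q))"
      using that(3) Ck_mono[of 2 "N + 1"] assms
      unfolding Ck_diffeo_onto_image_def Ck_map_def by auto
    show "((\<lambda>q. fst (\<phi> q)) has_derivative (\<lambda>p. 2 * fst p)) (at (0, 0))"
      using has_derivative_fst[OF that(5)] by (simp add: case_prod_beta)
    show "1-lipschitz_on {-1..1} F"
      using C1_on_interval_lipschitz_on that(8,10) by blast
  qed (use that assms in auto)
  then show ?thesis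
    by (intro exI[of _ "1/4"]) auto
qed

end
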